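(* Let $\mathbb{G}$ be a linear array whose difference coarray is hole-free, and let $\mathbb{F}_r$ be the fractal array generated by $\mathbb{G}$. Denote by $F_{\mathbb{G}}$ and $F_r$ the fragilities of $\mathbb{G}$ and $\mathbb{F}_r$. Then $F_r\le F_{\mathbb{G}}$ for all $r\ge1$.
   Context: A linear array is a finite set $\mathbb{G}\subset\mathbb{Z}$ with $\min\mathbb{G}=0$; its difference coarray is $\mathbb{D}=\{n_1-n_2:n_1,n_2\in\mathbb{G}\}$; its central ULA $\mathbb{U}$ is the largest set $\{-m,\dots,m\}$ contained in $\mathbb{D}$; $\mathbb{D}$ is hole-free if $\mathbb{D}=\mathbb{U}$. The fractal array generated by $\mathbb{G}$ (with $M=|\mathbb{U}|$) is $\mathbb{F}_0=\{0\}$, $\mathbb{F}_{r+1}=\bigcup_{n\in\mathbb{G}}(\mathbb{F}_r+nM^r)$ where $A+t=\{a+t:a\in A\}$. For an array $\mathbb{A}$ with difference coarray $\mathbb{D}_{\mathbb{A}}$, a sensor $n\in\mathbb{A}$ is essential if the difference coarray of $\mathbb{A}\setminus\{n\}$ differs from $\mathbb{D}_{\mathbb{A}}$. The fragility of $\mathbb{A}$ is $F_{\mathbb{A}}=|\mathbb{E}|/|\mathbb{A}|$ where $\mathbb{E}$ is the set of essential sensors of $\mathbb{A}$. *)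

theory Defs
  imports Complex_Main
begin

definition linear_array :: "int set \<Rightarrow> bool" where
  "linear_array G \<longleftrightarrow> finite G \<and> G \<noteq> {} \<and> Min G = 0"

definition diff_coarray :: "int set \<Rightarrow> int set" where
  "diff_coarray A = {n1 - n2 | n1 n2. n1 \<in> A \<and> n2 \<in> A}"

definition central_ULA :: "int set \<Rightarrow> int set" where
  "central_ULA A = (let m = (GREATEST m::nat. {- int m..int m} \<subseteq> diff_coarray A)
                    in {- int m..int m})"

definition hole_free :: "int set \<Rightarrow> bool" where
  "hole_free A \<longleftrightarrow> diff_coarray A = central_ULA A"

definition translate :: "int set \<Rightarrow> int \<Rightarrow> int set" where
  "translate A t = (\<lambda>a. a + t) ` A"

fun fractal :: "int set \<Rightarrow> nat \<Rightarrow> int set" where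
  "fractal G 0 = {0}"
| "fractal G (Suc r) =
     (\<Union>n\<in>G. translate (fractal G r) (n * int (card (central_ULA G)) ^ r))"

definition essential :: "int set \<Rightarrow> int \<Rightarrow> bool" where
  "essential A n \<longleftrightarrow> n \<in> A \<and> diff_coarray (A - {n}) \<noteq> diff_coarray A"

definition essential_set :: "int set \<Rightarrow> int set" where
  "essential_set A = {n \<in> A. essential A n}"

definition fragility :: "int set \<Rightarrow> real" where
  "fragility A = real (card (essential_set A)) / real (card A)"

end

theory Submission
  imports Defs
begin

text \<open>
  Hole-freeness gives \<open>G \<subseteq> [0, M)\<close>, hence \<open>F\<^sub>r \<subseteq> [0, M\<^sup>r)\<close>, and \<open>F\<^sub>r\<^sub>+\<^sub>1\<close> is the
  sum set \<open>F + T\<cdot>G\<close> with \<open>F = F\<^sub>r \<subseteq> [0, T)\<close>, \<open>T = M\<^sup>r\<close>. So each of its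
  sensors \<open>a + nT\<close> carries a unique "digit" \<open>n \<in> G\<close>, and \<open>|F + T\<cdot>G| = |F| |G|\<close>.
  The coarray of \<open>F + T\<cdot>G\<close> only depends on \<open>F\<close> and the coarray of \<open>G\<close>; hence if the digit
  \<open>n\<close> is not essential in \<open>G\<close>, the sensors with digit \<open>n\<close> can be dropped without changing
  the coarray, so they are not essential either. Thus at most \<open>|F| |E|\<close> of the \<open>|F| |G|\<close>
  sensors are essential, where \<open>E\<close> is the set of essential sensors of \<open>G\<close>.
\<close>

definition scaled_sumset :: "int \<Rightarrow> int set \<Rightarrow> int set \<Rightarrow> int set" where
  "scaled_sumset T F G = (\<lambda>(a, n). a + n * T) ` (F \<times> G)"

lemma fractal_Suc_eq_scaled_sumset:
  "fractal G (Suc r) = scaled_sumset (int (card (central_ULA G)) ^ r) (fractal G r) G"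
  by (auto simp: scaled_sumset_def translate_def)

lemma add_mult_eq_add_mult_iff:
  fixes a a' n n' T :: int
  assumes "0 \<le> a" "a < T" "0 \<le> a'" "a' < T"
  shows "a + n * T = a' + n' * T \<longleftrightarrow> a = a' \<and> n = n'"
proof
  assume eq: "a + n * T = a' + n' * T"
  have "n = (a + n * T) div T" "n' = (a' + n' * T) div T"
    using assms by simp_all
  then have "n = n'" using eq by simp
  with eq show "a = a' \<and> n = n'" by simp
qed simp

lemma inj_on_scaled_sumset:
  fixes F G :: "int set"
  assumes "F \<subseteq> {0..<T}"
  shows "inj_on (\<lambda>(a, n). a + n * T) (F \<times> G)"
proof (rule inj_onI, clarify)
  fix a n a' n' assume "a \<in> F" "a' \<in> F" "a + n * T = a' + n' * T"
  moreover from assms \<open>a \<in> F\<close> \<open>a' \<in> F\<close> have "0 \<le> a" "a < T" "0 \<le> a'" "a' < T"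
    by auto
  ultimately show "a = a' \<and> n = n'"
    by (simp add: add_mult_eq_add_mult_iff)
qed

lemma card_scaled_sumset:
  assumes "F \<subseteq> {0..<T}"
  shows "card (scaled_sumset T F G) = card F * card G"
  unfolding scaled_sumset_def
  by (simp add: card_image[OF inj_on_scaled_sumset[OF assms]] card_cartesian_product)

lemma scaled_sumset_subset_range:
  fixes T M :: int
  assumes "F \<subseteq> {0..<T}" "G \<subseteq> {0..<M}"
  shows "scaled_sumset T F G \<subseteq> {0..<M * T}"
proof
  fix x assume "x \<in> scaled_sumset T F G"
  then obtain a n where x: "x = a + n * T" "a \<in> F" "n \<in> G"
    unfolding scaled_sumset_def by auto
  with assms have a: "0 \<le> a" "a < T" and n: "0 \<le> n" "n + 1 \<le> M" by auto
  have "(n + 1) * T \<le> M * T" using n a by (intro mult_right_mono) auto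
  then show "x \<in> {0..<M * T}" using x a n by (simp add: algebra_simps)
qed

lemma diff_coarray_scaled_sumset:
  "diff_coarray (scaled_sumset T F G)
     = {a1 - a2 + d * T | a1 a2 d. a1 \<in> F \<and> a2 \<in> F \<and> d \<in> diff_coarray G}"
  (is "_ = ?D")
proof
  show "diff_coarray (scaled_sumset T F G) \<subseteq> ?D"
  proof
    fix x assume "x \<in> diff_coarray (scaled_sumset T F G)"
    then obtain a1 n1 a2 n2 where x: "x = (a1 + n1 * T) - (a2 + n2 * T)"
      and mem: "a1 \<in> F" "n1 \<in> G" "a2 \<in> F" "n2 \<in> G"
      unfolding diff_coarray_def scaled_sumset_def by auto
    have "x = a1 - a2 + (n1 - n2) * T" using x by (simp add: algebra_simps)
    moreover have "n1 - n2 \<in> diff_coarray G" using mem unfolding diff_coarray_def by blast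
    ultimately show "x \<in> ?D" using mem by blast
  qed
  show "?D \<subseteq> diff_coarray (scaled_sumset T F G)"
  proof
    fix x assume "x \<in> ?D"
    then obtain a1 a2 n1 n2 where x: "x = a1 - a2 + (n1 - n2) * T"
      and mem: "a1 \<in> F" "n1 \<in> G" "a2 \<in> F" "n2 \<in> G"
      unfolding diff_coarray_def by blast
    have "x = (a1 + n1 * T) - (a2 + n2 * T)" using x by (simp add: algebra_simps)
    moreover have "a1 + n1 * T \<in> scaled_sumset T F G" "a2 + n2 * T \<in> scaled_sumset T F G"
      using mem unfolding scaled_sumset_def by force+
    ultimately show "x \<in> diff_coarray (scaled_sumset T F G)"
      unfolding diff_coarray_def by blast
  qed
qed

lemma diff_coarray_mono: "A \<subseteq> B \<Longrightarrow> diff_coarray A \<subseteq> diff_coarray B"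
  unfolding diff_coarray_def by blast

lemma essential_set_scaled_sumset:
  assumes F: "F \<subseteq> {0..<T}"
  shows "essential_set (scaled_sumset T F G) \<subseteq> scaled_sumset T F (essential_set G)"
proof
  let ?S = "scaled_sumset T F G"
  fix x assume x_ess: "x \<in> essential_set ?S"
  then obtain a n where x: "x = a + n * T" "a \<in> F" "n \<in> G"
    unfolding essential_set_def scaled_sumset_def by auto
  have "essential G n"
  proof (rule ccontr)
    assume "\<not> essential G n"
    then have G_eq: "diff_coarray (G - {n}) = diff_coarray G"
      using x(3) unfolding essential_def by blast
    have "diff_coarray ?S = diff_coarray (scaled_sumset T F (G - {n}))"
      by (simp add: diff_coarray_scaled_sumset G_eq)
    also have "\<dots> \<subseteq> diff_coarray (?S - {x})"
    proof (rule diff_coarray_mono, rule subsetI)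
      fix y assume "y \<in> scaled_sumset T F (G - {n})"
      then obtain a' n' where y: "y = a' + n' * T" "a' \<in> F" "n' \<in> G" "n' \<noteq> n"
        unfolding scaled_sumset_def by auto
      with F x have "0 \<le> a'" "a' < T" "0 \<le> a" "a < T" by auto
      with x y have "y \<noteq> x"
        by (simp add: add_mult_eq_add_mult_iff)
      with y show "y \<in> ?S - {x}"
        unfolding scaled_sumset_def by auto
    qed
    finally have "diff_coarray ?S \<subseteq> diff_coarray (?S - {x})" .
    moreover have "diff_coarray (?S - {x}) \<subseteq> diff_coarray ?S"
      by (rule diff_coarray_mono) blast
    ultimately show False
      using x_ess unfolding essential_set_def essential_def by blast
  qed
  then show "x \<in> scaled_sumset T F (essential_set G)"
    using x unfolding scaled_sumset_def essential_set_def by force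
qed

lemma fragility_scaled_sumset_le:
  assumes F: "F \<subseteq> {0..<T}"
  shows "fragility (scaled_sumset T F G) \<le> fragility G"
proof (cases "finite G \<and> F \<noteq> {}")
  case False
  then have "card (scaled_sumset T F G) = 0"
    using finite_subset[OF F] by (auto simp: card_scaled_sumset[OF F])
  then show ?thesis
    by (simp add: fragility_def)
next
  case True
  have finF: "finite F" using finite_subset[OF F] by simp
  have "card (essential_set (scaled_sumset T F G))
          \<le> card (scaled_sumset T F (essential_set G))"
    using essential_set_scaled_sumset[OF F] True finF
    by (intro card_mono) (auto simp: scaled_sumset_def essential_set_def)
  also have "\<dots> = card F * card (essential_set G)"
    by (rule card_scaled_sumset[OF F])
  finally have ess: "real (card (essential_set (scaled_sumset T F G)))
                       \<le> real (card F) * real (card (essential_set G))"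
    by (simp flip: of_nat_mult)
  have "card F > 0" using True finF by (simp add: card_gt_0_iff)
  have "fragility (scaled_sumset T F G)
          = real (card (essential_set (scaled_sumset T F G))) / (real (card F) * real (card G))"
    by (simp add: fragility_def card_scaled_sumset[OF F])
  also have "\<dots> \<le> real (card F) * real (card (essential_set G)) / (real (card F) * real (card G))"
    using ess by (rule divide_right_mono) simp
  also have "\<dots> = fragility G"
    using \<open>card F > 0\<close> by (simp add: fragility_def)
  finally show ?thesis .
qed

lemma linear_array_subset_ULA_range:
  assumes "linear_array G" "hole_free G"
  shows "G \<subseteq> {0..<int (card (central_ULA G))}"
proof
  obtain k :: nat where k: "central_ULA G = {- int k..int k}"
    unfolding central_ULA_def Let_def by blast
  have G: "finite G" "G \<noteq> {}" "Min G = 0"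
    using assms(1) unfolding linear_array_def by auto
  then have "0 \<in> G" using Min_in by metis
  fix n assume n: "n \<in> G"
  have "0 \<le> n" using G n Min_le by metis
  moreover have "n - 0 \<in> diff_coarray G"
    unfolding diff_coarray_def using n \<open>0 \<in> G\<close> by blast
  then have "n \<le> int k"
    using assms(2) k unfolding hole_free_def by auto
  ultimately show "n \<in> {0..<int (card (central_ULA G))}" using k by simp
qed

lemma fractal_subset_range:
  assumes "linear_array G" "hole_free G"
  shows "fractal G r \<subseteq> {0..<int (card (central_ULA G)) ^ r}"
proof (induction r)
  case (Suc r)
  then show ?case
    using scaled_sumset_subset_range[OF Suc linear_array_subset_ULA_range[OF assms]]
    by (simp add: fractal_Suc_eq_scaled_sumset del: fractal.simps)
qed simp

theorem theorem6:
  fixes G :: "int set" and r :: nat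
  assumes "linear_array G" and "hole_free G" and "r \<ge> 1"
  shows "fragility (fractal G r) \<le> fragility G"
proof -
  obtain s where r: "r = Suc s" using assms(3) by (cases r) auto
  show ?thesis
    unfolding r fractal_Suc_eq_scaled_sumset
    by (rule fragility_scaled_sumset_le[OF fractal_subset_range[OF assms(1,2)]])
qed

end
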